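(* Every topological space with the discrete countable chain condition (DCCC) is selectively $3$-star-ccc.
   Context: No separation axioms are assumed. A space has the DCCC if every discrete family of open sets is countable. For $B\subseteq X$ and a family $\mathcal{U}$ of subsets of $X$: $\operatorname{st}^1(B,\mathcal{U})=\bigcup\{U\in\mathcal{U}:U\cap B\neq\emptyset\}$ and $\operatorname{st}^{n+1}(B,\mathcal{U})=\bigcup\{U\in\mathcal{U}:U\cap\operatorname{st}^n(B,\mathcal{U})\neq\emptyset\}$. A space $X$ is selectively $3$-star-ccc if for every open cover $\mathcal{U}$ of $X$ and every sequence $(\mathcal{A}_n:n\in\omega)$ of maximal pairwise disjoint families of open subsets of $X$, there is a sequence $(A_n\in\mathcal{A}_n:n\in\omega)$ with $\operatorname{st}^3(\bigcup_{n\in\omega}A_n,\mathcal{U})=X$. *)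

theory Defs
  imports "HOL-Analysis.Analysis"
begin

definition discrete_family :: "'a topology \<Rightarrow> 'a set set \<Rightarrow> bool" where
  "discrete_family X \<A> \<longleftrightarrow>
     (\<forall>x\<in>topspace X. \<exists>U. openin X U \<and> x \<in> U \<and>
        (\<forall>A\<in>\<A>. \<forall>B\<in>\<A>. A \<inter> U \<noteq> {} \<and> B \<inter> U \<noteq> {} \<longrightarrow> A = B))"

definition DCCC :: "'a topology \<Rightarrow> bool" where
  "DCCC X \<longleftrightarrow>
     (\<forall>\<A>. (\<forall>A\<in>\<A>. openin X A) \<and> discrete_family X \<A> \<longrightarrow> countable \<A>)"

definition open_cover :: "'a topology \<Rightarrow> 'a set set \<Rightarrow> bool" where
  "open_cover X \<U> \<longleftrightarrow> (\<forall>U\<in>\<U>. openin X U) \<and> \<Union>\<U> = topspace X"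

definition pairwise_disjoint_open_family :: "'a topology \<Rightarrow> 'a set set \<Rightarrow> bool" where
  "pairwise_disjoint_open_family X \<A> \<longleftrightarrow> (\<forall>A\<in>\<A>. openin X A) \<and> pairwise disjnt \<A>"

definition maximal_disjoint_open_family :: "'a topology \<Rightarrow> 'a set set \<Rightarrow> bool" where
  "maximal_disjoint_open_family X \<A> \<longleftrightarrow>
     pairwise_disjoint_open_family X \<A> \<and>
     (\<forall>\<B>. pairwise_disjoint_open_family X \<B> \<and> \<A> \<subseteq> \<B> \<longrightarrow> \<B> = \<A>)"

primrec star :: "nat \<Rightarrow> 'a set \<Rightarrow> 'a set set \<Rightarrow> 'a set" where
  "star 0 B \<U> = B"
| "star (Suc n) B \<U> = \<Union>{U\<in>\<U>. U \<inter> star n B \<U> \<noteq> {}}"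

definition selectively_n_star_ccc :: "nat \<Rightarrow> 'a topology \<Rightarrow> bool" where
  "selectively_n_star_ccc k X \<longleftrightarrow>
     (\<forall>\<U> \<A>s. open_cover X \<U> \<and> (\<forall>n::nat. maximal_disjoint_open_family X (\<A>s n)) \<longrightarrow>
        (\<exists>A. (\<forall>n. A n \<in> \<A>s n) \<and> star k (\<Union>n. A n) \<U> = topspace X))"

end

theory Submission
  imports Defs
begin

text \<open>Given an open cover \<open>\<U>\<close>, choose by Zorn's lemma a maximal family \<open>\<F>\<close> of nonempty
  members of \<open>\<U>\<close> such that every member of \<open>\<U>\<close> meets at most one member of \<open>\<F>\<close>. Then \<open>\<F>\<close> is
  discrete, hence countable by the DCCC, and by maximality \<open>st\<^sup>2(\<Union>\<F>, \<U>)\<close> is the whole space.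
  Enumerating \<open>\<F>\<close> as \<open>V\<^sub>0, V\<^sub>1, \<dots>\<close> and picking \<open>A\<^sub>n \<in> \<A>\<^sub>n\<close> meeting \<open>V\<^sub>n\<close> (possible by maximality of
  \<open>\<A>\<^sub>n\<close>) gives \<open>\<Union>\<F> \<subseteq> st\<^sup>1(\<Union>\<^sub>n A\<^sub>n, \<U>)\<close>, so \<open>st\<^sup>3(\<Union>\<^sub>n A\<^sub>n, \<U>)\<close> covers the space.\<close>

lemma star_mono: "B \<subseteq> C \<Longrightarrow> star n B \<U> \<subseteq> star n C \<U>"
  by (induction n) auto

lemma star_star: "star m (star n B \<U>) \<U> = star (m + n) B \<U>"
  by (induction m) auto

lemma subset_star_Suc: "V \<in> \<U> \<Longrightarrow> V \<inter> star n B \<U> \<noteq> {} \<Longrightarrow> V \<subseteq> star (Suc n) B \<U>"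
  by auto

lemma star_Suc_subset_Union: "star (Suc n) B \<U> \<subseteq> \<Union>\<U>"
  by auto

lemma star3_eq_Union:
  assumes "\<Union>\<U> \<subseteq> star 2 C \<U>" "C \<subseteq> star 1 B \<U>"
  shows "star 3 B \<U> = \<Union>\<U>"
proof
  have "\<Union>\<U> \<subseteq> star 2 (star 1 B \<U>) \<U>"
    using assms star_mono by blast
  then show "\<Union>\<U> \<subseteq> star 3 B \<U>"
    unfolding star_star by simp
  show "star 3 B \<U> \<subseteq> \<Union>\<U>"
    using star_Suc_subset_Union[of 2 B \<U>] by (simp add: numeral_3_eq_3)
qed

definition discrete_wrt :: "'a set set \<Rightarrow> 'a set set \<Rightarrow> bool" where
  "discrete_wrt \<U> \<F> \<longleftrightarrow> pairwise (\<lambda>V V'. \<forall>W\<in>\<U>. W \<inter> V = {} \<or> W \<inter> V' = {}) \<F>"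

lemma discrete_family_if_discrete_wrt:
  assumes "open_cover X \<U>" "discrete_wrt \<U> \<F>"
  shows "discrete_family X \<F>"
  unfolding discrete_family_def
proof
  fix x assume "x \<in> topspace X"
  then obtain W where "W \<in> \<U>" "x \<in> W"
    using assms(1) by (auto simp: open_cover_def)
  moreover have "openin X W"
    using \<open>W \<in> \<U>\<close> assms(1) by (simp add: open_cover_def)
  moreover have "\<forall>A\<in>\<F>. \<forall>B\<in>\<F>. A \<inter> W \<noteq> {} \<and> B \<inter> W \<noteq> {} \<longrightarrow> A = B"
    using \<open>W \<in> \<U>\<close> assms(2) by (auto simp: discrete_wrt_def pairwise_def Int_commute)
  ultimately show "\<exists>U. openin X U \<and> x \<in> U \<and> (\<forall>A\<in>\<F>. \<forall>B\<in>\<F>. A \<inter> U \<noteq> {} \<and> B \<inter> U \<noteq> {} \<longrightarrow> A = B)"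
    by blast
qed

lemma exists_maximal_discrete_wrt:
  obtains \<F> where "\<F> \<subseteq> \<U> - {{}}" "discrete_wrt \<U> \<F>"
    "\<And>V. V \<in> \<U> - {{}} \<Longrightarrow> discrete_wrt \<U> (insert V \<F>) \<Longrightarrow> V \<in> \<F>"
proof -
  define Z where "Z = {\<F>. \<F> \<subseteq> \<U> - {{}} \<and> discrete_wrt \<U> \<F>}"
  have "\<Union>C \<in> Z" if "C \<in> chains Z" for C
  proof -
    from that have "C \<subseteq> Z" "chain\<^sub>\<subseteq> C"
      by (auto simp: chains_def)
    then have "discrete_wrt \<U> (\<Union>C)"
      unfolding discrete_wrt_def by (intro pairwise_chain_Union) (auto simp: Z_def discrete_wrt_def)
    with \<open>C \<subseteq> Z\<close> show ?thesis
      by (auto simp: Z_def)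
  qed
  then obtain \<F> where "\<F> \<in> Z" and max: "\<forall>\<G>\<in>Z. \<F> \<subseteq> \<G> \<longrightarrow> \<G> = \<F>"
    using Zorn_Lemma[of Z] by blast
  show thesis
  proof
    show "\<F> \<subseteq> \<U> - {{}}" "discrete_wrt \<U> \<F>"
      using \<open>\<F> \<in> Z\<close> by (auto simp: Z_def)
    show "V \<in> \<F>" if "V \<in> \<U> - {{}}" "discrete_wrt \<U> (insert V \<F>)" for V
    proof -
      have "insert V \<F> \<in> Z"
        using that \<open>\<F> \<in> Z\<close> by (simp add: Z_def)
      with max have "insert V \<F> = \<F>" by blast
      then show ?thesis by blast
    qed
  qed
qed

lemma Union_subset_star2_if_maximal_discrete_wrt:
  assumes "discrete_wrt \<U> \<F>"
    and max: "\<And>V. V \<in> \<U> - {{}} \<Longrightarrow> discrete_wrt \<U> (insert V \<F>) \<Longrightarrow> V \<in> \<F>"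
  shows "\<Union>\<U> \<subseteq> star 2 (\<Union>\<F>) \<U>"
proof
  fix x assume "x \<in> \<Union>\<U>"
  then obtain V where V: "V \<in> \<U>" "x \<in> V" by blast
  have "\<exists>W\<in>\<U>. \<exists>V'\<in>\<F>. W \<inter> V \<noteq> {} \<and> W \<inter> V' \<noteq> {}"
  proof (cases "V \<in> \<F>")
    case True
    with V show ?thesis by blast
  next
    case False
    with V max have "\<not> discrete_wrt \<U> (insert V \<F>)" by blast
    with \<open>discrete_wrt \<U> \<F>\<close> show ?thesis
      unfolding discrete_wrt_def pairwise_insert by blast
  qed
  then obtain W V' where "W \<in> \<U>" "V' \<in> \<F>" "W \<inter> V \<noteq> {}" "W \<inter> V' \<noteq> {}" by blast
  then have "W \<subseteq> star 1 (\<Union>\<F>) \<U>" by auto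
  with \<open>W \<inter> V \<noteq> {}\<close> have "V \<inter> star 1 (\<Union>\<F>) \<U> \<noteq> {}" by blast
  then have "V \<subseteq> star 2 (\<Union>\<F>) \<U>"
    by (rule subset_star_Suc[OF V(1), of 1, unfolded Suc_1])
  with V(2) show "x \<in> star 2 (\<Union>\<F>) \<U>" by blast
qed

lemma empty_mem_maximal_disjoint_open_family:
  assumes "maximal_disjoint_open_family X \<A>"
  shows "{} \<in> \<A>"
proof -
  have "pairwise_disjoint_open_family X (insert {} \<A>)"
    using assms by (auto simp: maximal_disjoint_open_family_def pairwise_disjoint_open_family_def
        pairwise_insert)
  with assms show ?thesis
    unfolding maximal_disjoint_open_family_def by blast
qed

lemma maximal_disjoint_open_family_meets:
  assumes "maximal_disjoint_open_family X \<A>" "openin X V" "V \<noteq> {}"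
  obtains A where "A \<in> \<A>" "A \<inter> V \<noteq> {}"
proof (rule ccontr)
  assume "\<not> thesis"
  with that have disj: "\<forall>A\<in>\<A>. A \<inter> V = {}" by blast
  have "pairwise_disjoint_open_family X (insert V \<A>)"
    using assms disj
    by (auto simp: maximal_disjoint_open_family_def pairwise_disjoint_open_family_def
        pairwise_insert disjnt_def)
  with assms(1) have "V \<in> \<A>"
    unfolding maximal_disjoint_open_family_def by blast
  with disj \<open>V \<noteq> {}\<close> show False by blast
qed

lemma exists_selection_meeting_countable_family:
  fixes \<A>s :: "nat \<Rightarrow> 'a set set"
  assumes \<A>s: "\<And>n. maximal_disjoint_open_family X (\<A>s n)" and "countable \<F>"
    and \<F>: "\<And>V. V \<in> \<F> \<Longrightarrow> openin X V \<and> V \<noteq> {}"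
  obtains A where "\<And>n. A n \<in> \<A>s n" "\<And>V. V \<in> \<F> \<Longrightarrow> V \<inter> (\<Union>n. A n) \<noteq> {}"
proof (cases "\<F> = {}")
  case True
  show thesis
    using that[of "\<lambda>_. {}"] True empty_mem_maximal_disjoint_open_family[OF \<A>s] by blast
next
  case False
  define enum where "enum = from_nat_into \<F>"
  have "\<exists>A. A \<in> \<A>s n \<and> A \<inter> enum n \<noteq> {}" for n
    using maximal_disjoint_open_family_meets[OF \<A>s] \<F> from_nat_into[OF False]
    unfolding enum_def by metis
  then obtain A where A: "\<And>n. A n \<in> \<A>s n" "\<And>n. A n \<inter> enum n \<noteq> {}"
    by metis
  have "range enum = \<F>"
    using False \<open>countable \<F>\<close> by (simp add: enum_def)
  then have "V \<inter> (\<Union>n. A n) \<noteq> {}" if "V \<in> \<F>" for V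
    using that A(2) by blast
  with A(1) show thesis
    by (rule that)
qed

theorem corollary5:
  fixes X :: "'a topology"
  assumes "DCCC X"
  shows "selectively_n_star_ccc 3 X"
  unfolding selectively_n_star_ccc_def
proof (intro allI impI, elim conjE)
  fix \<U> :: "'a set set" and \<A>s :: "nat \<Rightarrow> 'a set set"
  assume \<U>: "open_cover X \<U>" and \<A>s: "\<forall>n. maximal_disjoint_open_family X (\<A>s n)"
  obtain \<F> where \<F>: "\<F> \<subseteq> \<U> - {{}}" "discrete_wrt \<U> \<F>"
    and max: "\<And>V. V \<in> \<U> - {{}} \<Longrightarrow> discrete_wrt \<U> (insert V \<F>) \<Longrightarrow> V \<in> \<F>"
    using exists_maximal_discrete_wrt[of \<U>] by blast
  have "discrete_family X \<F>"
    using \<U> \<F>(2) by (rule discrete_family_if_discrete_wrt)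
  moreover have \<F>_open: "openin X V \<and> V \<noteq> {}" if "V \<in> \<F>" for V
    using that \<U> \<F>(1) by (auto simp: open_cover_def)
  ultimately have "countable \<F>"
    using \<open>DCCC X\<close> unfolding DCCC_def by (meson \<F>_open)
  then obtain A where A: "\<And>n. A n \<in> \<A>s n" "\<And>V. V \<in> \<F> \<Longrightarrow> V \<inter> (\<Union>n. A n) \<noteq> {}"
    using exists_selection_meeting_countable_family[of X \<A>s, OF \<A>s[rule_format] _ \<F>_open] by blast
  have "\<Union>\<F> \<subseteq> star 1 (\<Union>n. A n) \<U>"
    using subset_star_Suc[of _ \<U> 0 "\<Union>n. A n"] A(2) \<F>(1) by auto
  moreover have "\<Union>\<U> \<subseteq> star 2 (\<Union>\<F>) \<U>"
    by (rule Union_subset_star2_if_maximal_discrete_wrt[OF \<F>(2) max])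
  ultimately have "star 3 (\<Union>n. A n) \<U> = topspace X"
    using star3_eq_Union \<U> unfolding open_cover_def by metis
  with A(1) show "\<exists>A. (\<forall>n. A n \<in> \<A>s n) \<and> star 3 (\<Union>n. A n) \<U> = topspace X"
    by blast
qed

end
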